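(* Let $d\ge1$, $\delta_1,\dots,\delta_d>0$, $0\le\kappa<1$, $\mathbf a=(a_1,\dots,a_d)\in(0,\infty)^d$ and $\mathbf t=(t_1,\dots,t_d)\in(0,\infty)^d$. Then $s(\mathbf t)=\hat s(\mathbf t)$, i.e. the minimum defining $s(\mathbf t)$ over $A\in\{a_i,a_i+t_i:1\le i\le d\}$ is already attained over $A\in\{a_i+t_i:1\le i\le d\}$.
   Context: For $A>0$ define $\mathcal K_1(A)=\{k:a_k\ge A\}$, $\mathcal K_2(A)=\{k:a_k+t_k\le A\}\setminus\mathcal K_1(A)$, $\mathcal K_3(A)=\{1,\dots,d\}\setminus(\mathcal K_1(A)\cup\mathcal K_2(A))$ and $$D(A)=\sum_{k\in\mathcal K_1(A)}\delta_k+\sum_{k\in\mathcal K_2(A)}\delta_k+\kappa\sum_{k\in\mathcal K_3(A)}\delta_k+(1-\kappa)\frac{\sum_{k\in\mathcal K_3(A)}a_k\delta_k-\sum_{k\in\mathcal K_2(A)}t_k\delta_k}{A}.$$ Then $s(\mathbf t)=\min\{D(A):A\in\{a_i,a_i+t_i:1\le i\le d\}\}$ and $\hat s(\mathbf t)=\min\{D(A):A\in\{a_i+t_i:1\le i\le d\}\}$. *)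

theory Defs
  imports Complex_Main
begin

text \<open>Indices range over {1..d}; vectors are functions nat \<Rightarrow> real.\<close>

definition K1 :: "nat \<Rightarrow> (nat \<Rightarrow> real) \<Rightarrow> real \<Rightarrow> nat set" where
  "K1 d a A = {k \<in> {1..d}. a k \<ge> A}"

definition K2 :: "nat \<Rightarrow> (nat \<Rightarrow> real) \<Rightarrow> (nat \<Rightarrow> real) \<Rightarrow> real \<Rightarrow> nat set" where
  "K2 d a t A = {k \<in> {1..d}. a k + t k \<le> A} - K1 d a A"

definition K3 :: "nat \<Rightarrow> (nat \<Rightarrow> real) \<Rightarrow> (nat \<Rightarrow> real) \<Rightarrow> real \<Rightarrow> nat set" where
  "K3 d a t A = {1..d} - (K1 d a A \<union> K2 d a t A)"

definition Dfun :: "nat \<Rightarrow> (nat \<Rightarrow> real) \<Rightarrow> real \<Rightarrow> (nat \<Rightarrow> real) \<Rightarrow> (nat \<Rightarrow> real) \<Rightarrow> real \<Rightarrow> real" where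
  "Dfun d \<delta> \<kappa> a t A =
     (\<Sum>k\<in>K1 d a A. \<delta> k) + (\<Sum>k\<in>K2 d a t A. \<delta> k) + \<kappa> * (\<Sum>k\<in>K3 d a t A. \<delta> k)
     + (1 - \<kappa>) * ((\<Sum>k\<in>K3 d a t A. a k * \<delta> k) - (\<Sum>k\<in>K2 d a t A. t k * \<delta> k)) / A"

definition s_fun :: "nat \<Rightarrow> (nat \<Rightarrow> real) \<Rightarrow> real \<Rightarrow> (nat \<Rightarrow> real) \<Rightarrow> (nat \<Rightarrow> real) \<Rightarrow> real" where
  "s_fun d \<delta> \<kappa> a t = Min (Dfun d \<delta> \<kappa> a t ` ((\<lambda>i. a i) ` {1..d} \<union> (\<lambda>i. a i + t i) ` {1..d}))"

definition s_hat :: "nat \<Rightarrow> (nat \<Rightarrow> real) \<Rightarrow> real \<Rightarrow> (nat \<Rightarrow> real) \<Rightarrow> (nat \<Rightarrow> real) \<Rightarrow> real" where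
  "s_hat d \<delta> \<kappa> a t = Min (Dfun d \<delta> \<kappa> a t ` ((\<lambda>i. a i + t i) ` {1..d}))"

end

theory Submission
  imports Defs "HOL-Analysis.Convex"
begin

text \<open>
  Multiplying by \<open>A\<close> turns \<open>D\<close> into \<open>N(A) = A \<cdot> D(A) = \<Sum>\<^sub>k \<delta>\<^sub>k (\<kappa> A + (1 - \<kappa>) r\<^sub>k(A))\<close>,
  where \<open>r\<^sub>k(A) = max (min A a\<^sub>k) (A - t\<^sub>k)\<close>. Each \<open>r\<^sub>k\<close> is concave except for a convex kink
  at \<open>a\<^sub>k + t\<^sub>k\<close>, so \<open>N\<close> is concave between consecutive points \<open>a\<^sub>k + t\<^sub>k\<close> (and \<open>0\<close>, where
  \<open>N(0) = 0\<close>). If \<open>D(A)\<close> were smaller than \<open>D\<close> at every \<open>a\<^sub>k + t\<^sub>k\<close>, the line \<open>A' \<mapsto> D(A) A'\<close>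
  would lie below \<open>N\<close> at both ends of the concavity interval around \<open>A\<close>, strictly at the right
  one, hence strictly below \<open>N\<close> at \<open>A\<close> itself: a contradiction.
\<close>

lemma concave_on_cong:
  assumes "\<And>x. x \<in> S \<Longrightarrow> f x = g x"
  shows "concave_on S f \<longleftrightarrow> concave_on S g"
  unfolding concave_on_iff using assms by (metis convex_def)

lemma concave_on_min:
  assumes "concave_on S f" "concave_on S g"
  shows "concave_on S (\<lambda>x. min (f x) (g x))"
  unfolding concave_on_iff
proof (intro conjI ballI allI impI)
  show "convex S" using assms(1) by (rule concave_on_imp_convex)
next
  fix x y and u v :: real
  assume xy: "x \<in> S" "y \<in> S" and uv: "0 \<le> u" "0 \<le> v" "u + v = 1"
  have "u * min (f x) (g x) + v * min (f y) (g y) \<le> u * f x + v * f y"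
    "u * min (f x) (g x) + v * min (f y) (g y) \<le> u * g x + v * g y"
    using uv by (simp_all add: add_mono mult_left_mono)
  moreover have "u * f x + v * f y \<le> f (u *\<^sub>R x + v *\<^sub>R y)"
    "u * g x + v * g y \<le> g (u *\<^sub>R x + v *\<^sub>R y)"
    using assms xy uv by (auto simp: concave_on_iff)
  ultimately show "u * min (f x) (g x) + v * min (f y) (g y)
      \<le> min (f (u *\<^sub>R x + v *\<^sub>R y)) (g (u *\<^sub>R x + v *\<^sub>R y))"
    by linarith
qed

lemma concave_on_sum_fun:
  assumes "finite I" "convex S" "\<And>i. i \<in> I \<Longrightarrow> concave_on S (f i)"
  shows "concave_on S (\<lambda>x. \<Sum>i\<in>I. f i x)"
  using assms by (induction I rule: finite_induct) (auto simp: concave_on_const concave_on_add)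

lemma concave_on_above_line:
  fixes H :: "real \<Rightarrow> real"
  assumes "concave_on {L..R} H" "L < x" "x \<le> R" "m * L \<le> H L" "m * R < H R"
  shows "m * x < H x"
proof -
  define u where "u = (x - L) / (R - L)"
  have u: "0 < u" "u \<le> 1" using assms(2,3) by (auto simp: u_def field_simps)
  have "u * (R - L) = x - L" using assms(2,3) by (simp add: u_def)
  then have x_eq: "(1 - u) *\<^sub>R L + u *\<^sub>R R = x" by (simp add: algebra_simps)
  have "m * x = (1 - u) * (m * L) + u * (m * R)" by (simp flip: x_eq add: algebra_simps)
  also have "\<dots> < (1 - u) * H L + u * H R"
    using u assms(4,5) by (intro add_le_less_mono mult_left_mono mult_strict_left_mono) auto
  also have "\<dots> \<le> H ((1 - u) *\<^sub>R L + u *\<^sub>R R)"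
    using u assms(2,3) by (intro concave_onD[OF assms(1)]) auto
  also have "\<dots> = H x" by (simp only: x_eq)
  finally show ?thesis .
qed

lemma concave_between_breakpoints_ratio:
  fixes H :: "real \<Rightarrow> real" and B :: "real set"
  assumes "finite B" "\<And>b. b \<in> B \<Longrightarrow> 0 < b" "H 0 = 0"
    and concave: "\<And>L R. 0 \<le> L \<Longrightarrow> L \<le> R \<Longrightarrow> (\<forall>b\<in>B. b \<notin> {L<..<R}) \<Longrightarrow> concave_on {L..R} H"
    and "0 < x" "b\<^sub>0 \<in> B" "x \<le> b\<^sub>0"
  shows "\<exists>b\<in>B. H b / b \<le> H x / x"
proof (rule ccontr)
  assume "\<not> ?thesis"
  then have below: "H x / x < H b / b" if "b \<in> B" for b
    using that by force
  define m where "m = H x / x"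
  have Hx: "H x = m * x" using \<open>0 < x\<close> by (simp add: m_def)
  have above: "m * b < H b" if "b \<in> B" for b
    using below[OF that] assms(2)[OF that] by (simp add: m_def pos_less_divide_eq mult.commute)
  define R where "R = Min {b \<in> B. x \<le> b}"
  define L where "L = Max (insert 0 {b \<in> B. b < x})"
  have R_ne: "{b \<in> B. x \<le> b} \<noteq> {}" using assms(6,7) by blast
  have R: "R \<in> B" "x \<le> R" "\<And>b. b \<in> B \<Longrightarrow> x \<le> b \<Longrightarrow> R \<le> b"
    using Min_in[OF _ R_ne] Min_le[of "{b \<in> B. x \<le> b}"] assms(1) unfolding R_def by auto
  have L: "L = 0 \<or> L \<in> B" "0 \<le> L" "L < x" "\<And>b. b \<in> B \<Longrightarrow> b < x \<Longrightarrow> b \<le> L"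
    using Max_in[of "insert 0 {b \<in> B. b < x}"] assms(1,5) by (auto simp: L_def)
  have "m * L \<le> H L" using L(1) above \<open>H 0 = 0\<close> by (auto intro: less_imp_le)
  moreover have "\<forall>b\<in>B. b \<notin> {L<..<R}" using L(4) R(3) by force
  then have "concave_on {L..R} H" using L R by (intro concave) auto
  ultimately have "m * x < H x" using concave_on_above_line above R L by blast
  then show False using Hx by simp
qed

definition ramp :: "real \<Rightarrow> real \<Rightarrow> real \<Rightarrow> real" where
  "ramp a t A = max (min A a) (A - t)"

definition Dnum :: "nat \<Rightarrow> (nat \<Rightarrow> real) \<Rightarrow> real \<Rightarrow> (nat \<Rightarrow> real) \<Rightarrow> (nat \<Rightarrow> real) \<Rightarrow> real \<Rightarrow> real"
  where "Dnum d \<delta> \<kappa> a t A = (\<Sum>k\<in>{1..d}. \<delta> k * (\<kappa> * A + (1 - \<kappa>) * ramp (a k) (t k) A))"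

lemma ramp_concave_on:
  assumes "0 \<le> t" "a + t \<notin> {L<..<R}"
  shows "concave_on {L..R} (ramp a t)"
proof (cases "a + t \<le> L")
  case True
  then have "concave_on {L..R} (ramp a t) \<longleftrightarrow> concave_on {L..R} (\<lambda>x. x - t)"
    using assms(1) by (intro concave_on_cong) (auto simp: ramp_def)
  then show ?thesis by (simp add: concave_on_diff concave_on_ident convex_on_const)
next
  case False
  then have "concave_on {L..R} (ramp a t) \<longleftrightarrow> concave_on {L..R} (\<lambda>x. min x a)"
    using assms by (intro concave_on_cong) (auto simp: ramp_def)
  then show ?thesis by (simp add: concave_on_min concave_on_ident concave_on_const)
qed

lemma Dnum_concave_on:
  assumes "\<And>k. k \<in> {1..d} \<Longrightarrow> 0 \<le> \<delta> k" "0 \<le> \<kappa>" "\<kappa> \<le> 1"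
    and "\<And>k. k \<in> {1..d} \<Longrightarrow> 0 \<le> t k"
    and "\<And>k. k \<in> {1..d} \<Longrightarrow> a k + t k \<notin> {L<..<R}"
  shows "concave_on {L..R} (Dnum d \<delta> \<kappa> a t)"
  unfolding Dnum_def using assms
  by (intro concave_on_sum_fun concave_on_cmul concave_on_add ramp_concave_on)
     (auto simp: concave_on_ident)

lemma Dnum_0:
  assumes "\<And>k. k \<in> {1..d} \<Longrightarrow> 0 \<le> a k" "\<And>k. k \<in> {1..d} \<Longrightarrow> 0 \<le> t k"
  shows "Dnum d \<delta> \<kappa> a t 0 = 0"
  unfolding Dnum_def ramp_def using assms by (intro sum.neutral) auto

lemma Dnum_eq_mult_Dfun:
  assumes "0 < A" "\<And>k. k \<in> {1..d} \<Longrightarrow> 0 \<le> t k"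
  shows "Dnum d \<delta> \<kappa> a t A = A * Dfun d \<delta> \<kappa> a t A"
proof -
  define f where "f k = \<delta> k * (\<kappa> * A + (1 - \<kappa>) * ramp (a k) (t k) A)" for k
  let ?K1 = "K1 d a A" and ?K2 = "K2 d a t A" and ?K3 = "K3 d a t A"
  have "{1..d} = ?K1 \<union> ?K2 \<union> ?K3" "?K1 \<inter> ?K2 = {}" "(?K1 \<union> ?K2) \<inter> ?K3 = {}"
    by (auto simp: K1_def K2_def K3_def)
  moreover have "finite ?K1" "finite ?K2" "finite ?K3" by (simp_all add: K1_def K2_def K3_def)
  ultimately have "Dnum d \<delta> \<kappa> a t A = sum f ?K1 + sum f ?K2 + sum f ?K3"
    unfolding Dnum_def f_def by (simp add: sum.union_disjoint)
  also have "sum f ?K1 = (\<Sum>k\<in>?K1. A * \<delta> k)"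
    using assms(2) by (intro sum.cong) (auto simp: f_def ramp_def K1_def algebra_simps)
  also have "sum f ?K2 = (\<Sum>k\<in>?K2. A * \<delta> k - (1 - \<kappa>) * (t k * \<delta> k))"
    by (intro sum.cong) (auto simp: f_def ramp_def K1_def K2_def algebra_simps)
  also have "sum f ?K3 = (\<Sum>k\<in>?K3. \<kappa> * A * \<delta> k + (1 - \<kappa>) * (a k * \<delta> k))"
    by (intro sum.cong) (auto simp: f_def ramp_def K1_def K2_def K3_def algebra_simps)
  finally show ?thesis
    using assms(1)
    by (simp add: Dfun_def sum.distrib sum_subtractf flip: sum_distrib_left) (simp add: field_simps)
qed

lemma Dfun_breakpoint_le:
  assumes "\<And>k. k \<in> {1..d} \<Longrightarrow> 0 \<le> \<delta> k" "0 \<le> \<kappa>" "\<kappa> \<le> 1"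
    and "\<And>k. k \<in> {1..d} \<Longrightarrow> 0 < a k" "\<And>k. k \<in> {1..d} \<Longrightarrow> 0 \<le> t k"
    and "0 < A" "j \<in> {1..d}" "A \<le> a j + t j"
  shows "\<exists>i\<in>{1..d}. Dfun d \<delta> \<kappa> a t (a i + t i) \<le> Dfun d \<delta> \<kappa> a t A"
proof -
  let ?B = "(\<lambda>i. a i + t i) ` {1..d}"
  have B_pos: "0 < b" if "b \<in> ?B" for b
    using that assms(4,5) by (force simp: add_pos_nonneg)
  have "\<exists>b\<in>?B. Dnum d \<delta> \<kappa> a t b / b \<le> Dnum d \<delta> \<kappa> a t A / A"
  proof (rule concave_between_breakpoints_ratio)
    show "Dnum d \<delta> \<kappa> a t 0 = 0" using assms(4,5) by (intro Dnum_0) (auto intro: less_imp_le)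
    show "concave_on {L..R} (Dnum d \<delta> \<kappa> a t)" if "\<forall>b\<in>?B. b \<notin> {L<..<R}" for L R
      using that assms(1-3,5) by (intro Dnum_concave_on) auto
  qed (use B_pos assms(6-8) in auto)
  moreover have "Dnum d \<delta> \<kappa> a t b / b = Dfun d \<delta> \<kappa> a t b" if "0 < b" for b
    using Dnum_eq_mult_Dfun[OF that assms(5)] that by simp
  ultimately show ?thesis using B_pos assms(6) by auto
qed

lemma Min_image_Un_dominated:
  assumes "finite X" "finite Y" "Y \<noteq> {}" "\<And>x. x \<in> X \<Longrightarrow> \<exists>y\<in>Y. f y \<le> f x"
  shows "Min (f ` (X \<union> Y)) = Min (f ` Y)"
proof (rule antisym)
  show "Min (f ` (X \<union> Y)) \<le> Min (f ` Y)"
    using assms(1-3) by (intro Min_antimono) auto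
  show "Min (f ` Y) \<le> Min (f ` (X \<union> Y))"
  proof (rule Min.boundedI)
    fix z assume "z \<in> f ` (X \<union> Y)"
    then obtain y where "y \<in> Y" "f y \<le> z" using assms(4) by blast
    then show "Min (f ` Y) \<le> z" using assms(2) by (meson Min_le finite_imageI image_eqI order_trans)
  qed (use assms in auto)
qed

theorem mainTheorem5:
  fixes d :: nat and \<delta> a t :: "nat \<Rightarrow> real" and \<kappa> :: real
  assumes "d \<ge> 1"
    and "\<And>i. i \<in> {1..d} \<Longrightarrow> \<delta> i > 0"
    and "0 \<le> \<kappa>" and "\<kappa> < 1"
    and "\<And>i. i \<in> {1..d} \<Longrightarrow> a i > 0"
    and "\<And>i. i \<in> {1..d} \<Longrightarrow> t i > 0"
  shows "s_fun d \<delta> \<kappa> a t = s_hat d \<delta> \<kappa> a t"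
  unfolding s_fun_def s_hat_def
proof (rule Min_image_Un_dominated)
  show "(\<lambda>i. a i + t i) ` {1..d} \<noteq> {}" using assms(1) by auto
  show "\<exists>B\<in>(\<lambda>i. a i + t i) ` {1..d}. Dfun d \<delta> \<kappa> a t B \<le> Dfun d \<delta> \<kappa> a t A"
    if A: "A \<in> a ` {1..d}" for A
  proof -
    obtain j where "j \<in> {1..d}" "A = a j" using A by blast
    then show ?thesis
      using Dfun_breakpoint_le[of d \<delta> \<kappa> a t A j] assms(2-6) by (simp add: less_imp_le)
  qed
qed auto

end
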